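(* Let $(K_n,\Sigma)$ be a signed complete graph with $n\geq4$, and let $X(\Sigma)$ be the set of edges $vw$ of $K_n$ such that the triangle $uvw$ is even for every $u\in V(K_n)\setminus\{v,w\}$. Then every connected component of the graph on $V(K_n)$ with edge set $X(\Sigma)$ is a complete graph.
   Context: A signed graph is a pair $(G,\Sigma)$ with $G$ a finite simple graph and $\Sigma\subseteq E(G)$ (the odd edges). A triangle $uvw$ is odd (resp. even) if $|\Sigma\cap\{uv,uw,vw\}|$ is odd (resp. even). *)

theory Defs
  imports Main
begin

definition complete_edges :: "'a set \<Rightarrow> 'a set set" where
  "complete_edges V = {e. e \<subseteq> V \<and> card e = 2}"

text \<open>A signed complete graph (K_V, Sigma): Sigma (here S) is a set of edges of K_V (the odd edges).\<close>
definition signed_complete :: "'a set \<Rightarrow> 'a set set \<Rightarrow> bool" where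
  "signed_complete V S \<longleftrightarrow> finite V \<and> S \<subseteq> complete_edges V"

definition even_triangle :: "'a set set \<Rightarrow> 'a \<Rightarrow> 'a \<Rightarrow> 'a \<Rightarrow> bool" where
  "even_triangle S u v w \<longleftrightarrow> even (card (S \<inter> {{u,v},{u,w},{v,w}}))"

definition Xset :: "'a set \<Rightarrow> 'a set set \<Rightarrow> 'a set set" where
  "Xset V S = {e \<in> complete_edges V. \<forall>v w. e = {v,w} \<longrightarrow>
       (\<forall>u \<in> V - {v,w}. even_triangle S u v w)}"

definition adj :: "'a set set \<Rightarrow> 'a \<Rightarrow> 'a \<Rightarrow> bool" where
  "adj F x y \<longleftrightarrow> {x,y} \<in> F"

definition components_complete :: "'a set \<Rightarrow> 'a set set \<Rightarrow> bool" where
  "components_complete V F \<longleftrightarrow>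
     (\<forall>x\<in>V. \<forall>y\<in>V. x \<noteq> y \<longrightarrow> (adj F)\<^sup>*\<^sup>* x y \<longrightarrow> {x,y} \<in> F)"

end

theory Submission
  imports Defs
begin

text \<open>The four triangles spanned by four vertices use every edge exactly twice, so the sum of
  their parities is even. Hence if vw and wx lie in X, the triangles uvw, uwx and vwx are even
  for every further vertex u, and so is uvx: X is transitive, and its components are cliques.\<close>

lemma even_card_Int_three_iff:
  assumes "a \<noteq> b" "a \<noteq> c" "b \<noteq> c"
  shows "even (card (S \<inter> {a,b,c})) \<longleftrightarrow> \<not> (a \<in> S \<longleftrightarrow> (b \<in> S \<longleftrightarrow> c \<in> S))"
  using assms
  by (cases "a \<in> S"; cases "b \<in> S"; cases "c \<in> S") (simp_all add: Int_insert_left)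

lemma even_triangle_iff:
  assumes "u \<noteq> v" "u \<noteq> w" "v \<noteq> w"
  shows "even_triangle S u v w \<longleftrightarrow> \<not> ({u,v} \<in> S \<longleftrightarrow> ({u,w} \<in> S \<longleftrightarrow> {v,w} \<in> S))"
proof -
  have "{u,v} \<noteq> {u,w}" "{u,v} \<noteq> {v,w}" "{u,w} \<noteq> {v,w}"
    using assms by (auto simp: doubleton_eq_iff)
  then show ?thesis
    unfolding even_triangle_def by (rule even_card_Int_three_iff)
qed

lemma even_triangle_commute:
  "even_triangle S u v w \<longleftrightarrow> even_triangle S u w v"
  "even_triangle S u v w \<longleftrightarrow> even_triangle S v u w"
  unfolding even_triangle_def by (simp_all add: insert_commute)

lemma even_triangle_tetrahedron:
  assumes "distinct [u, v, w, x]"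
    and "even_triangle S u v w" "even_triangle S u w x" "even_triangle S v w x"
  shows "even_triangle S u v x"
proof -
  have "{w,u} = {u,w}" "{w,v} = {v,w}"
    by (simp_all add: insert_commute)
  with assms show ?thesis
    by (simp add: even_triangle_iff) argo
qed

lemma Xset_memD:
  assumes "{v,w} \<in> Xset V S"
  shows "v \<in> V" "w \<in> V" "v \<noteq> w"
  using assms unfolding Xset_def complete_edges_def
  by (auto simp: card_insert_if split: if_splits)

lemma doubleton_mem_Xset_iff:
  assumes "v \<in> V" "w \<in> V" "v \<noteq> w"
  shows "{v,w} \<in> Xset V S \<longleftrightarrow> (\<forall>u \<in> V - {v,w}. even_triangle S u v w)"
proof -
  have "{v,w} \<in> complete_edges V"
    using assms by (simp add: complete_edges_def)
  moreover have "(\<forall>u \<in> V - {a,b}. even_triangle S u a b) \<longleftrightarrow>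
      (\<forall>u \<in> V - {v,w}. even_triangle S u v w)" if "{v,w} = {a,b}" for a b
  proof -
    from that consider "a = v" "b = w" | "a = w" "b = v"
      by (auto simp: doubleton_eq_iff)
    then show ?thesis
      by cases (simp_all add: insert_commute even_triangle_commute(1)[of S _ w v])
  qed
  ultimately show ?thesis
    unfolding Xset_def by blast
qed

lemma Xset_trans:
  assumes vw: "{v,w} \<in> Xset V S" and wx: "{w,x} \<in> Xset V S" and "v \<noteq> x"
  shows "{v,x} \<in> Xset V S"
proof -
  note vertices = Xset_memD[OF vw] Xset_memD[OF wx]
  have even_vw: "even_triangle S u v w" if "u \<in> V - {v,w}" for u
    using vw that vertices by (simp add: doubleton_mem_Xset_iff)
  have even_wx: "even_triangle S u w x" if "u \<in> V - {w,x}" for u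
    using wx that vertices by (simp add: doubleton_mem_Xset_iff)
  have even_vwx: "even_triangle S v w x"
    using even_wx vertices \<open>v \<noteq> x\<close> by simp
  have "even_triangle S u v x" if u: "u \<in> V - {v,x}" for u
  proof (cases "u = w")
    case True
    with even_vwx show ?thesis
      by (simp add: even_triangle_commute(2))
  next
    case False
    have "distinct [u, v, w, x]"
      using u False vertices \<open>v \<noteq> x\<close> by auto
    moreover have "even_triangle S u v w" "even_triangle S u w x"
      using u False even_vw even_wx by auto
    ultimately show ?thesis
      using even_vwx by (rule even_triangle_tetrahedron)
  qed
  then show ?thesis
    using vertices \<open>v \<noteq> x\<close> by (simp add: doubleton_mem_Xset_iff)
qed

lemma components_complete_if_trans:
  assumes trans: "\<And>v w x. {v,w} \<in> F \<Longrightarrow> {w,x} \<in> F \<Longrightarrow> v \<noteq> x \<Longrightarrow> {v,x} \<in> F"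
  shows "components_complete V F"
proof -
  have "x = y \<or> {x,y} \<in> F" if "(adj F)\<^sup>*\<^sup>* x y" for x y
    using that
  proof induction
    case base
    then show ?case by simp
  next
    case (step y z)
    then have "{y,z} \<in> F"
      by (simp add: adj_def)
    with step.IH trans show ?case
      by (cases "x = z") auto
  qed
  then show ?thesis
    unfolding components_complete_def by blast
qed

theorem lemma3p3:
  fixes V :: "'a set" and S :: "'a set set"
  assumes "signed_complete V S"
    and "card V \<ge> 4"
  shows "components_complete V (Xset V S)"
  using Xset_trans by (rule components_complete_if_trans)

end
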